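(* If $\mathcal{C}\subset\mathbb{R}_{\ge2}$ is $1$-spaced (i.e. $|\alpha-\beta|\ge1$ for all distinct $\alpha,\beta\in\mathcal{C}$), then \[ \mathop{\sum\sum}_{\alpha,\beta\in\mathcal{C},\ \alpha>\beta} \frac{1}{\alpha\log \alpha} \cdot \frac{1}{\beta\log \beta} \cdot \bigg(\frac{1}{\beta}+\frac{\log \beta}{\alpha/\beta}\bigg) \ll \kappa(\mathcal{C}), \] with an absolute implied constant.
   Context: For $\alpha>0$, $\kappa(\alpha)=\frac1\alpha\prod_{p\le\alpha}(1-\frac1p)$ (product over primes), and $\kappa(\mathcal{C})=\sum_{\alpha\in\mathcal{C}}\kappa(\alpha)$. *)

theory Defs
  imports "HOL-Analysis.Analysis" "HOL-Library.Extended_Nonnegative_Real"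
    "HOL-Computational_Algebra.Primes"
begin

definition kappa :: "real \<Rightarrow> real" where
  "kappa \<alpha> = (1 / \<alpha>) * (\<Prod>p\<in>{p::nat. prime p \<and> real p \<le> \<alpha>}. (1 - 1 / real p))"

definition one_spaced :: "real set \<Rightarrow> bool" where
  "one_spaced C \<longleftrightarrow> (\<forall>\<alpha>\<in>C. \<forall>\<beta>\<in>C. \<alpha> \<noteq> \<beta> \<longrightarrow> \<bar>\<alpha> - \<beta>\<bar> \<ge> 1)"

definition kappa_set :: "real set \<Rightarrow> ennreal" where
  "kappa_set C = (\<Sum>\<^sub>\<infinity>\<alpha>\<in>C. ennreal (kappa \<alpha>))"

end

(*
  For fixed \<alpha>, split the weight of (\<alpha>, \<beta>) into 1/(\<alpha> ln \<alpha>) \<beta>^-2 / ln \<beta> and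
  1/(\<alpha>^2 ln \<alpha>). One-spacing makes \<beta> \<mapsto> \<lfloor>\<beta>\<rfloor> injective, so \<Sum> \<beta>^-2 \<le> 1 and
  there are at most \<alpha> points \<beta> < \<alpha>; hence the inner sum is at most 3/(\<alpha> ln \<alpha>).
  It remains to show 1/(\<alpha> ln \<alpha>) \<ll> \<kappa>(\<alpha>), i.e. the lower bound in Mertens' third theorem,
  \<Prod>_{p \<le> x} (1 - 1/p) \<ge> c / ln x.  With s = 1 + 1/ln x, each factor 1/(1 - 1/p) is at most
  (1 + p^-s) exp(2/p^2 + ln p / (p ln x)); the product of the 1 + p^-s is a subsum of
  \<zeta>(s) \<le> s/(s-1) = 1 + ln x, and the exponents sum to O(1) by \<Sum>_{p \<le> n} ln p / p \<le> 2 ln n,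
  which follows from Legendre's formula for n! and n! \<le> n^n.
*)
theory Submission
  imports Defs
begin

section \<open>Zeta partial sums and Euler products\<close>

lemma powr_neg_le_diff_powr:
  fixes s y :: real
  assumes s: "s > 1" and y: "y \<ge> 1"
  shows "(y + 1) powr (-s) \<le> (y powr (1 - s) - (y + 1) powr (1 - s)) / (s - 1)"
proof -
  have "\<exists>z. y < z \<and> z < y + 1 \<and>
      (y + 1) powr (1 - s) - y powr (1 - s) = ((y + 1) - y) * ((1 - s) * z powr (1 - s - 1))"
  proof (intro MVT2)
    fix x assume "y \<le> x" "x \<le> y + 1"
    then show "((\<lambda>a. a powr (1 - s)) has_real_derivative (1 - s) * x powr (1 - s - 1)) (at x)"
      using y has_real_derivative_powr[of x "1 - s"] by simp
  qed simp
  then obtain z where z: "y < z" "z < y + 1"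
    and mvt: "(y + 1) powr (1 - s) - y powr (1 - s) = (1 - s) * z powr (-s)"
    by (auto simp: algebra_simps)
  have "(s - 1) * (y + 1) powr (-s) \<le> (s - 1) * z powr (-s)"
    using z y s by (intro mult_left_mono powr_mono2') auto
  also have "\<dots> = y powr (1 - s) - (y + 1) powr (1 - s)"
    using mvt by (simp add: algebra_simps)
  finally show ?thesis
    using s by (simp add: field_simps)
qed

lemma sum_powr_neg_le:
  fixes s :: real
  assumes s: "s > 1"
  shows "(\<Sum>k\<in>{1..N}. real k powr (-s)) \<le> s / (s - 1)"
proof -
  have partial: "(\<Sum>k\<in>{1..n}. real k powr (-s)) \<le> s / (s - 1) - real n powr (1 - s) / (s - 1)"
    if "n \<ge> 1" for n
    using that
  proof (induction n rule: dec_induct)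
    case base
    have "s / (s - 1) - 1 / (s - 1) = 1"
      using s by (simp add: diff_divide_distrib[symmetric])
    then show ?case by simp
  next
    case (step n)
    have "(\<Sum>k\<in>{1..Suc n}. real k powr (-s))
        = (\<Sum>k\<in>{1..n}. real k powr (-s)) + (real n + 1) powr (-s)"
      by (simp add: add.commute)
    also have "\<dots> \<le> s / (s - 1) - real n powr (1 - s) / (s - 1)
        + (real n powr (1 - s) - (real n + 1) powr (1 - s)) / (s - 1)"
      using step powr_neg_le_diff_powr[OF s, of "real n"] by simp
    also have "\<dots> = s / (s - 1) - real (Suc n) powr (1 - s) / (s - 1)"
      by (simp add: diff_divide_distrib add_divide_distrib add.commute)
    finally show ?case .
  qed
  show ?thesis
  proof (cases "N \<ge> 1")
    case True
    have "real N powr (1 - s) / (s - 1) \<ge> 0"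
      using s by simp
    with partial[OF True] show ?thesis by linarith
  qed (use s in simp)
qed

lemma sum_inverse_squares_atLeastAtMost_le:
  fixes M :: nat
  assumes "M \<ge> 1"
  shows "(\<Sum>k\<in>{2..M}. 1 / real k ^ 2) \<le> 1 - 1 / real M"
  using assms
proof (induction M rule: dec_induct)
  case (step m)
  have "1 / real (Suc m) ^ 2 \<le> 1 / (real m * (1 + real m))"
    using step.hyps by (intro divide_left_mono) (auto simp: power2_eq_square)
  also have "\<dots> = 1 / real m - 1 / real (Suc m)"
    using step.hyps by (simp add: field_simps)
  finally have "1 / real (Suc m) ^ 2 \<le> 1 / real m - 1 / real (Suc m)" .
  moreover have "{2..Suc m} = insert (Suc m) {2..m}"
    using step.hyps by auto
  ultimately show ?case
    using step.IH by simp
qed simp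

lemma sum_inverse_squares_le_one:
  fixes S :: "nat set"
  assumes "finite S" "S \<subseteq> {2..}"
  shows "(\<Sum>k\<in>S. 1 / real k ^ 2) \<le> 1"
proof (cases "S = {}")
  case False
  define M where "M = Max S"
  have "M \<in> S"
    using assms False by (simp add: M_def)
  then have "M \<ge> 2" "S \<subseteq> {2..M}"
    using assms by (auto simp: M_def)
  then have "(\<Sum>k\<in>S. 1 / real k ^ 2) \<le> (\<Sum>k\<in>{2..M}. 1 / real k ^ 2)"
    by (intro sum_mono2) auto
  also have "\<dots> \<le> 1 - 1 / real M"
    using \<open>M \<ge> 2\<close> by (intro sum_inverse_squares_atLeastAtMost_le) auto
  also have "\<dots> \<le> 1"
    by simp
  finally show ?thesis .
qed simp

lemma prime_factors_prod_primes:
  fixes X :: "nat set"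
  assumes "finite X" "\<forall>p\<in>X. prime p"
  shows "prime_factors (\<Prod>X) = X"
proof -
  have "prime_factors (prod id X) = \<Union>((prime_factors \<circ> id) ` X)"
    using assms by (intro prime_factors_prod) auto
  also have "\<dots> = X"
    using assms(2) by (auto simp: prime_prime_factors)
  finally show ?thesis by simp
qed

lemma prod_one_plus_primes_powr_neg_le:
  fixes s :: real and P :: "nat set"
  assumes s: "s > 1" and P: "finite P" "\<forall>p\<in>P. prime p"
  shows "(\<Prod>p\<in>P. 1 + real p powr (-s)) \<le> s / (s - 1)"
proof -
  have inj: "inj_on Prod (Pow P)"
  proof (rule inj_onI)
    fix X Y assume XY: "X \<in> Pow P" "Y \<in> Pow P" "\<Prod>X = \<Prod>Y"
    then have "finite X" "finite Y" "\<forall>p\<in>X. prime p" "\<forall>p\<in>Y. prime p"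
      using P finite_subset by auto
    then show "X = Y"
      using XY(3) prime_factors_prod_primes by metis
  qed
  have divisors: "Prod ` Pow P \<subseteq> {1..\<Prod>P}"
  proof
    fix m assume "m \<in> Prod ` Pow P"
    then obtain X where X: "X \<subseteq> P" "m = \<Prod>X" by auto
    have "\<Prod>X dvd \<Prod>P"
      using X P by (intro prod_dvd_prod_subset) auto
    moreover have "\<Prod>P > 0" "\<Prod>X > 0"
      using X P by (auto intro!: prod_pos simp: prime_gt_0_nat)
    ultimately show "m \<in> {1..\<Prod>P}"
      using X by (auto intro: dvd_imp_le)
  qed
  have "(\<Prod>p\<in>P. 1 + real p powr (-s)) = (\<Sum>X\<in>Pow P. \<Prod>p\<in>X. real p powr (-s))"
    using prod_add[OF P(1), of "\<lambda>p. real p powr (-s)" "\<lambda>_. 1"] by (simp add: add.commute)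
  also have "\<dots> = (\<Sum>X\<in>Pow P. real (\<Prod>X) powr (-s))"
    by (simp add: prod_powr_distrib)
  also have "\<dots> = (\<Sum>m\<in>Prod ` Pow P. real m powr (-s))"
    using inj by (simp add: sum.reindex)
  also have "\<dots> \<le> (\<Sum>m\<in>{1..\<Prod>P}. real m powr (-s))"
    using divisors by (intro sum_mono2) auto
  also have "\<dots> \<le> s / (s - 1)"
    by (rule sum_powr_neg_le[OF s])
  finally show ?thesis .
qed

section \<open>A Chebyshev-type bound\<close>

lemma div_le_card_multiples:
  fixes p n :: nat
  assumes "p > 0"
  shows "n div p \<le> card {k\<in>{1..n}. p dvd k}"
proof -
  have "(\<lambda>j. j * p) ` {1..n div p} \<subseteq> {k\<in>{1..n}. p dvd k}"
    using assms by (auto simp: less_eq_div_iff_mult_less_eq)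
  then have "card ((\<lambda>j. j * p) ` {1..n div p}) \<le> card {k\<in>{1..n}. p dvd k}"
    by (intro card_mono) auto
  moreover have "card ((\<lambda>j. j * p) ` {1..n div p}) = n div p"
    using assms by (subst card_image) (auto simp: inj_on_def)
  ultimately show ?thesis by simp
qed

lemma sum_ln_prime_factors_le:
  fixes k :: nat
  assumes "k \<ge> 1"
  shows "(\<Sum>p\<in>prime_factors k. ln (real p)) \<le> ln (real k)"
proof -
  have "(\<Prod>p\<in>prime_factors k. p) dvd (\<Prod>p\<in>prime_factors k. p ^ multiplicity p k)"
    using assms by (intro prod_dvd_prod dvd_power) (auto simp: prime_factors_multiplicity)
  also have "\<dots> = k"
    using assms prod_prime_factors[of k] by simp
  finally have "(\<Prod>p\<in>prime_factors k. p) \<le> k"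
    using assms by (auto intro: dvd_imp_le)
  moreover have "(\<Prod>p\<in>prime_factors k. p) > 0"
    by (auto intro!: prod_pos simp: prime_factors_gt_0_nat)
  ultimately have "ln (real (\<Prod>p\<in>prime_factors k. p)) \<le> ln (real k)"
    by (intro ln_mono) (simp_all only: of_nat_le_iff of_nat_0_less_iff)
  then show ?thesis
    by (simp add: ln_prod prime_factors_gt_0_nat)
qed

lemma sum_div_mult_ln_primes_le_ln_fact:
  fixes n :: nat
  shows "(\<Sum>p | prime p \<and> p \<le> n. real (n div p) * ln (real p)) \<le> ln (fact n)"
proof -
  define P where "P = {p. prime p \<and> p \<le> n}"
  have "finite P"
    by (simp add: P_def)
  have "(\<Sum>p\<in>P. real (n div p) * ln (real p))
      \<le> (\<Sum>p\<in>P. real (card {k\<in>{1..n}. p dvd k}) * ln (real p))"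
    using div_le_card_multiples
    by (intro sum_mono mult_right_mono) (auto simp: P_def prime_gt_0_nat Suc_le_eq)
  also have "\<dots> = (\<Sum>p\<in>P. \<Sum>k\<in>{k\<in>{1..n}. p dvd k}. ln (real p))"
    by simp
  also have "\<dots> = (\<Sum>k\<in>{1..n}. \<Sum>p\<in>{p\<in>P. p dvd k}. ln (real p))"
    using \<open>finite P\<close> by (rule sum.swap_restrict) simp
  also have "\<dots> = (\<Sum>k\<in>{1..n}. \<Sum>p\<in>prime_factors k. ln (real p))"
    by (intro sum.cong refl arg_cong[where f = "\<lambda>A. sum _ A"])
      (auto simp: P_def prime_factors_dvd intro: order.trans[OF dvd_imp_le])
  also have "\<dots> \<le> (\<Sum>k\<in>{1..n}. ln (real k))"
    by (intro sum_mono sum_ln_prime_factors_le) auto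
  also have "\<dots> = ln (fact n)"
    unfolding fact_prod of_nat_prod by (subst ln_prod) auto
  finally show ?thesis
    by (simp add: P_def)
qed

lemma sum_ln_prime_div_prime_le:
  fixes n :: nat
  assumes n: "n \<ge> 1"
  shows "(\<Sum>p | prime p \<and> p \<le> n. ln (real p) / real p) \<le> 2 * ln (real n)"
proof -
  have "(\<Sum>p | prime p \<and> p \<le> n. real n / 2 * (ln (real p) / real p))
      \<le> (\<Sum>p | prime p \<and> p \<le> n. real (n div p) * ln (real p))"
  proof (rule sum_mono)
    fix p assume "p \<in> {p. prime p \<and> p \<le> n}"
    then have p: "p > 0" "p \<le> n"
      by (auto simp: prime_gt_0_nat)
    then have "n div p > 0"
      by (simp add: div_greater_zero_iff)
    then have "p \<le> n div p * p"
      by simp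
    moreover have "n div p * p + n mod p = n" "n mod p < p"
      using p by simp_all
    ultimately have "n \<le> 2 * (n div p * p)"
      by linarith
    then have "real n / 2 \<le> real (n div p) * real p"
      by (simp add: field_simps flip: of_nat_mult)
    then have "real n / 2 * (ln (real p) / real p) \<le> real (n div p) * real p * (ln (real p) / real p)"
      using p by (intro mult_right_mono) auto
    then show "real n / 2 * (ln (real p) / real p) \<le> real (n div p) * ln (real p)"
      using p by simp
  qed
  also have "\<dots> \<le> ln (fact n)"
    by (rule sum_div_mult_ln_primes_le_ln_fact)
  also have "\<dots> \<le> ln (real n ^ n)"
    using fact_le_power[of n, where 'a=real] by (intro ln_mono) auto
  also have "\<dots> = real n * ln (real n)"
    using n by (simp add: ln_realpow)
  finally have "real n / 2 * (\<Sum>p | prime p \<and> p \<le> n. ln (real p) / real p) \<le> real n * ln (real n)"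
    by (simp add: sum_distrib_left)
  then show ?thesis
    using n by (simp add: field_simps)
qed

section \<open>Mertens' lower bound\<close>

lemma inverse_one_minus_le_exp:
  fixes a :: real
  assumes "0 \<le> a" "a \<le> 1/2"
  shows "1 / (1 - a) \<le> (1 + a) * exp (2 * a^2)"
proof -
  have "a^2 \<le> (1/2)^2"
    using assms by (intro power_mono) auto
  then have "1 \<le> 1 + a^2 * (1 - 2 * a^2)"
    by (simp add: power2_eq_square)
  also have "\<dots> = (1 - a) * ((1 + a) * (1 + 2 * a^2))"
    by (simp add: algebra_simps power2_eq_square power4_eq_xxxx)
  finally have "1 / (1 - a) \<le> (1 + a) * (1 + 2 * a^2)"
    using assms by (simp add: divide_le_eq mult.commute)
  also have "\<dots> \<le> (1 + a) * exp (2 * a^2)"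
    using assms exp_ge_add_one_self[of "2 * a^2"] by (intro mult_left_mono) auto
  finally show ?thesis .
qed

lemma inverse_one_minus_inverse_le:
  fixes p L :: real
  assumes p: "p \<ge> 2" and L: "L > 0"
  shows "1 / (1 - 1/p) \<le> (1 + p powr -(1 + 1/L)) * exp (2 / p^2 + ln p / (p * L))"
proof -
  define a where "a = 1/p"
  define b where "b = p powr -(1 + 1/L)"
  have a: "0 \<le> a" "a \<le> 1/2"
    using p by (auto simp: a_def field_simps)
  have "b = exp (- ln p) * exp (- (ln p / L))"
    using p by (simp add: b_def powr_def algebra_simps flip: exp_add)
  then have b: "b = a * exp (- (ln p / L))"
    using p by (simp add: exp_minus a_def inverse_eq_divide)
  have "ln p \<ge> 0"
    using p by simp
  then have "b \<le> a" "0 \<le> b"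
    using b a L by (auto simp: mult_left_le)
  have "a * (1 - ln p / L) \<le> a * exp (- (ln p / L))"
    using a exp_ge_add_one_self[of "- (ln p / L)"] by (intro mult_left_mono) auto
  then have "a * (1 - ln p / L) \<le> b"
    by (simp add: b)
  then have "a - b \<le> ln p / (p * L)"
    by (simp add: a_def algebra_simps)
  have "1 / (1 - a) \<le> (1 + a) * exp (2 * a^2)"
    using a by (rule inverse_one_minus_le_exp)
  also have "1 + a \<le> (1 + b) * (1 + (a - b))"
    using \<open>b \<le> a\<close> \<open>0 \<le> b\<close> mult_right_mono[OF \<open>b \<le> a\<close> \<open>0 \<le> b\<close>] by (simp add: algebra_simps)
  also have "\<dots> \<le> (1 + b) * exp (a - b)"
    using \<open>0 \<le> b\<close> exp_ge_add_one_self[of "a - b"] by (intro mult_left_mono) auto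
  also have "(1 + b) * exp (a - b) * exp (2 * a^2) = (1 + b) * exp (2 * a^2 + (a - b))"
    by (simp add: exp_add mult_ac)
  also have "\<dots> \<le> (1 + b) * exp (2 / p^2 + ln p / (p * L))"
    using \<open>a - b \<le> ln p / (p * L)\<close> \<open>0 \<le> b\<close> by (intro mult_left_mono) (auto simp: a_def power_one_over)
  finally show ?thesis
    by (simp add: a_def b_def)
qed

lemma sum_primes_exponent_le:
  fixes n :: nat and L :: real
  assumes n: "n \<ge> 1" and L: "L > 0" "ln (real n) \<le> L"
  shows "(\<Sum>p | prime p \<and> p \<le> n. 2 / real p^2 + ln (real p) / (real p * L)) \<le> 4"
proof -
  have "(\<Sum>p | prime p \<and> p \<le> n. 2 / real p^2 + ln (real p) / (real p * L))
      = 2 * (\<Sum>p | prime p \<and> p \<le> n. 1 / real p^2) + (\<Sum>p | prime p \<and> p \<le> n. ln (real p) / real p) / L"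
    by (simp add: sum.distrib sum_distrib_left sum_divide_distrib)
  also have "\<dots> \<le> 2 * 1 + 2 * ln (real n) / L"
    using L n
    by (intro add_mono mult_left_mono divide_right_mono sum_ln_prime_div_prime_le
        sum_inverse_squares_le_one) (auto simp: prime_ge_2_nat)
  also have "\<dots> \<le> 4"
    using L by (simp add: divide_le_eq)
  finally show ?thesis .
qed

lemma prod_inverse_one_minus_inverse_primes_le:
  fixes n :: nat and L :: real
  assumes n: "n \<ge> 1" and L: "L > 0" "ln (real n) \<le> L"
  shows "(\<Prod>p | prime p \<and> p \<le> n. 1 / (1 - 1 / real p)) \<le> (1 + L) * exp 4"
proof -
  define P where "P = {p. prime p \<and> p \<le> n}"
  define s where "s = 1 + 1/L"
  have "finite P" and P: "\<And>p. p \<in> P \<Longrightarrow> prime p \<and> real p \<ge> 2"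
    by (auto simp: P_def prime_ge_2_nat)
  have "s > 1"
    using L by (simp add: s_def)
  have "(\<Prod>p\<in>P. 1 / (1 - 1 / real p))
      \<le> (\<Prod>p\<in>P. (1 + real p powr -s) * exp (2 / real p^2 + ln (real p) / (real p * L)))"
  proof (rule prod_mono)
    fix p assume "p \<in> P"
    then have "real p \<ge> 2"
      using P by blast
    moreover from this have "1 - 1 / real p > 0"
      by (simp add: field_simps)
    ultimately show "0 \<le> 1 / (1 - 1 / real p) \<and>
        1 / (1 - 1 / real p) \<le> (1 + real p powr -s) * exp (2 / real p^2 + ln (real p) / (real p * L))"
      using inverse_one_minus_inverse_le[OF _ L(1)] by (simp add: s_def)
  qed
  also have "\<dots> = (\<Prod>p\<in>P. 1 + real p powr -s) * exp (\<Sum>p\<in>P. 2 / real p^2 + ln (real p) / (real p * L))"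
    by (simp add: prod.distrib exp_sum[OF \<open>finite P\<close>])
  also have "\<dots> \<le> s / (s - 1) * exp 4"
    using P \<open>s > 1\<close> \<open>finite P\<close> sum_primes_exponent_le[OF n L] unfolding P_def
    by (intro mult_mono prod_one_plus_primes_powr_neg_le) (auto intro: prod_nonneg)
  also have "s / (s - 1) = 1 + L"
    using L by (simp add: s_def field_simps)
  finally show ?thesis
    by (simp add: P_def)
qed

lemma primes_le_real_eq_primes_le_nat_floor:
  fixes x :: real
  assumes "x \<ge> 0"
  shows "{p::nat. prime p \<and> real p \<le> x} = {p. prime p \<and> p \<le> nat \<lfloor>x\<rfloor>}"
  using assms by (auto simp: le_nat_floor) (metis of_nat_floor of_nat_le_iff order_trans)

lemma prod_one_minus_inverse_primes_ge:
  fixes x :: real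
  assumes x: "x \<ge> 2"
  shows "exp (-4) / (3 * ln x) \<le> (\<Prod>p | prime p \<and> real p \<le> x. 1 - 1 / real p)"
proof -
  define n where "n = nat \<lfloor>x\<rfloor>"
  have primes: "{p::nat. prime p \<and> real p \<le> x} = {p. prime p \<and> p \<le> n}"
    unfolding n_def using x by (intro primes_le_real_eq_primes_le_nat_floor) auto
  have "n \<ge> 1" "real n \<le> x"
    using x by (auto simp: n_def le_nat_floor)
  have "ln x \<ge> 2/3"
    using x ln2_ge_two_thirds ln_mono[of 2 x] by linarith
  have pos: "(\<Prod>p | prime p \<and> p \<le> n. 1 - 1 / real p) > 0"
    by (intro prod_pos) (auto simp: prime_ge_2_nat field_simps dest: prime_ge_2_nat)
  have "1 / (\<Prod>p | prime p \<and> p \<le> n. 1 - 1 / real p) = (\<Prod>p | prime p \<and> p \<le> n. 1 / (1 - 1 / real p))"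
    by (simp add: prod_dividef)
  also have "\<dots> \<le> (1 + ln x) * exp 4"
    using x \<open>n \<ge> 1\<close> \<open>real n \<le> x\<close> \<open>ln x \<ge> 2/3\<close>
    by (intro prod_inverse_one_minus_inverse_primes_le) auto
  also have "\<dots> \<le> 3 * ln x * exp 4"
    using \<open>ln x \<ge> 2/3\<close> by (intro mult_right_mono) auto
  finally show ?thesis
    using pos x \<open>ln x \<ge> 2/3\<close> by (simp add: primes divide_le_eq exp_minus field_simps)
qed

lemma kappa_nonneg:
  assumes "x \<ge> 0"
  shows "kappa x \<ge> 0"
  using assms unfolding kappa_def
  by (intro mult_nonneg_nonneg prod_nonneg) (auto dest: prime_ge_1_nat simp: field_simps)

lemma inverse_mult_ln_le_kappa:
  assumes x: "x \<ge> 2"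
  shows "1 / (x * ln x) \<le> 3 * exp 4 * kappa x"
proof -
  have "1 / (x * ln x) = 3 * exp 4 * (1 / x * (exp (-4) / (3 * ln x)))"
    by (simp add: exp_minus field_simps)
  also have "\<dots> \<le> 3 * exp 4 * kappa x"
    unfolding kappa_def using x
    by (intro mult_left_mono prod_one_minus_inverse_primes_ge) auto
  finally show ?thesis .
qed

section \<open>One-spaced sets\<close>

lemma one_spaced_subset: "one_spaced C \<Longrightarrow> D \<subseteq> C \<Longrightarrow> one_spaced D"
  unfolding one_spaced_def by blast

lemma inj_on_nat_floor_one_spaced:
  assumes "one_spaced D" "D \<subseteq> {0..}"
  shows "inj_on (\<lambda>x. nat \<lfloor>x\<rfloor>) D"
proof (rule inj_onI)
  fix x y assume xy: "x \<in> D" "y \<in> D" "nat \<lfloor>x\<rfloor> = nat \<lfloor>y\<rfloor>"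
  moreover have "\<lfloor>x\<rfloor> \<ge> 0" "\<lfloor>y\<rfloor> \<ge> 0"
    using xy assms(2) by auto
  ultimately have "\<lfloor>x\<rfloor> = \<lfloor>y\<rfloor>"
    by (metis eq_nat_nat_iff)
  then have "\<bar>x - y\<bar> < 1"
    by linarith
  then show "x = y"
    using assms(1) xy unfolding one_spaced_def by force
qed

lemma sum_inverse_squares_one_spaced_le_one:
  assumes "one_spaced D" "finite D" "D \<subseteq> {2..}"
  shows "(\<Sum>x\<in>D. 1 / x^2) \<le> 1"
proof -
  have "(\<Sum>x\<in>D. 1 / x^2) \<le> (\<Sum>x\<in>D. 1 / real (nat \<lfloor>x\<rfloor>) ^ 2)"
  proof (rule sum_mono)
    fix x assume "x \<in> D"
    then have "2 \<le> nat \<lfloor>x\<rfloor>" "real (nat \<lfloor>x\<rfloor>) \<le> x"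
      using assms(3) le_nat_floor[of 2 x] by auto
    then show "1 / x^2 \<le> 1 / real (nat \<lfloor>x\<rfloor>) ^ 2"
      by (intro divide_left_mono power_mono mult_pos_pos) auto
  qed
  also have "\<dots> = (\<Sum>k\<in>(\<lambda>x. nat \<lfloor>x\<rfloor>) ` D. 1 / real k ^ 2)"
  proof -
    have "inj_on (\<lambda>x. nat \<lfloor>x\<rfloor>) D"
      using assms by (intro inj_on_nat_floor_one_spaced) auto
    then show ?thesis
      by (simp add: sum.reindex)
  qed
  also have "\<dots> \<le> 1"
  proof (rule sum_inverse_squares_le_one)
    show "(\<lambda>x. nat \<lfloor>x\<rfloor>) ` D \<subseteq> {2..}"
      using assms(3) le_nat_floor[of 2] by force
  qed (use assms in simp)
  finally show ?thesis .
qed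

lemma card_one_spaced_less_le:
  assumes "one_spaced D" "D \<subseteq> {1..}" "a \<ge> 0"
  shows "real (card {x\<in>D. x < a}) \<le> a"
proof -
  have "one_spaced {x\<in>D. x < a}"
    using assms(1) by (rule one_spaced_subset) auto
  then have "inj_on (\<lambda>x. nat \<lfloor>x\<rfloor>) {x\<in>D. x < a}"
    using assms(2) by (intro inj_on_nat_floor_one_spaced) auto
  moreover have "(\<lambda>x. nat \<lfloor>x\<rfloor>) ` {x\<in>D. x < a} \<subseteq> {1..nat \<lfloor>a\<rfloor>}"
  proof
    fix k assume "k \<in> (\<lambda>x. nat \<lfloor>x\<rfloor>) ` {x\<in>D. x < a}"
    then obtain x where "x \<in> D" "x < a" "k = nat \<lfloor>x\<rfloor>"
      by blast
    moreover from this have "x \<ge> 1"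
      using assms(2) by auto
    ultimately show "k \<in> {1..nat \<lfloor>a\<rfloor>}"
      using le_nat_floor[of 1 x] by (simp add: nat_mono floor_mono)
  qed
  ultimately have "card {x\<in>D. x < a} \<le> card {1..nat \<lfloor>a\<rfloor>}"
    by (metis card_image card_mono finite_atLeastAtMost)
  then have "real (card {x\<in>D. x < a}) \<le> real (nat \<lfloor>a\<rfloor>)"
    by simp
  also have "\<dots> \<le> a"
    using assms(3) by simp
  finally show ?thesis .
qed

section \<open>The double sum\<close>

definition pair_weight :: "real \<Rightarrow> real \<Rightarrow> real" where
  "pair_weight \<alpha> \<beta> = (1 / (\<alpha> * ln \<alpha>)) * (1 / (\<beta> * ln \<beta>)) * (1 / \<beta> + ln \<beta> / (\<alpha> / \<beta>))"

lemma pair_weight_nonneg: "\<alpha> \<ge> 1 \<Longrightarrow> \<beta> \<ge> 1 \<Longrightarrow> pair_weight \<alpha> \<beta> \<ge> 0"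
  unfolding pair_weight_def by simp

lemma pair_weight_le:
  assumes "\<beta> \<ge> 2" "\<alpha> > \<beta>"
  shows "pair_weight \<alpha> \<beta> \<le> 3/2 * (1 / (\<alpha> * ln \<alpha>)) * (1 / \<beta>^2) + 1 / (\<alpha>^2 * ln \<alpha>)"
proof -
  have "ln \<beta> \<ge> 2/3"
    using assms ln2_ge_two_thirds ln_mono[of 2 \<beta>] by linarith
  have "ln \<alpha> > 0"
    using assms by simp
  have "pair_weight \<alpha> \<beta> = 1 / (\<alpha> * ln \<alpha>) * (1 / \<beta>^2) * (1 / ln \<beta>) + 1 / (\<alpha>^2 * ln \<alpha>)"
    using assms \<open>ln \<beta> \<ge> 2/3\<close> \<open>ln \<alpha> > 0\<close> by (simp add: pair_weight_def field_simps power2_eq_square)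
  also have "\<dots> \<le> 1 / (\<alpha> * ln \<alpha>) * (1 / \<beta>^2) * (3/2) + 1 / (\<alpha>^2 * ln \<alpha>)"
    using assms \<open>ln \<beta> \<ge> 2/3\<close> \<open>ln \<alpha> > 0\<close> by (intro add_right_mono mult_left_mono) (auto simp: divide_le_eq)
  finally show ?thesis
    by (simp add: mult_ac)
qed

lemma sum_pair_weight_le:
  assumes "one_spaced D" "finite D" "D \<subseteq> {2..}"
  shows "(\<Sum>\<alpha>\<in>D. \<Sum>\<beta>\<in>{\<beta>\<in>D. \<beta> < \<alpha>}. pair_weight \<alpha> \<beta>) \<le> 3 * (\<Sum>\<alpha>\<in>D. 1 / (\<alpha> * ln \<alpha>))"
  unfolding sum_distrib_left
proof (rule sum_mono)
  fix \<alpha> assume "\<alpha> \<in> D"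
  then have "\<alpha> \<ge> 2" "ln \<alpha> > 0"
    using assms(3) by auto
  have "one_spaced {\<beta>\<in>D. \<beta> < \<alpha>}" "finite {\<beta>\<in>D. \<beta> < \<alpha>}"
    using assms(1,2) by (auto intro: one_spaced_subset)
  have "(\<Sum>\<beta>\<in>{\<beta>\<in>D. \<beta> < \<alpha>}. pair_weight \<alpha> \<beta>)
      \<le> (\<Sum>\<beta>\<in>{\<beta>\<in>D. \<beta> < \<alpha>}. 3/2 * (1 / (\<alpha> * ln \<alpha>)) * (1 / \<beta>^2) + 1 / (\<alpha>^2 * ln \<alpha>))"
    using assms(3) by (intro sum_mono pair_weight_le) auto
  also have "\<dots> = 3/2 * (1 / (\<alpha> * ln \<alpha>)) * (\<Sum>\<beta>\<in>{\<beta>\<in>D. \<beta> < \<alpha>}. 1 / \<beta>^2)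
      + real (card {\<beta>\<in>D. \<beta> < \<alpha>}) * (1 / (\<alpha>^2 * ln \<alpha>))"
    by (simp add: sum.distrib sum_distrib_left)
  also have "\<dots> \<le> 3/2 * (1 / (\<alpha> * ln \<alpha>)) * 1 + \<alpha> * (1 / (\<alpha>^2 * ln \<alpha>))"
    using assms \<open>\<alpha> \<ge> 2\<close> \<open>ln \<alpha> > 0\<close>
    by (intro add_mono mult_left_mono mult_right_mono sum_inverse_squares_one_spaced_le_one
        card_one_spaced_less_le \<open>one_spaced {\<beta>\<in>D. \<beta> < \<alpha>}\<close> \<open>finite {\<beta>\<in>D. \<beta> < \<alpha>}\<close>) auto
  also have "\<dots> \<le> 3 * (1 / (\<alpha> * ln \<alpha>))"
    using \<open>\<alpha> \<ge> 2\<close> \<open>ln \<alpha> > 0\<close> by (simp add: field_simps power2_eq_square)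
  finally show "(\<Sum>\<beta>\<in>{\<beta>\<in>D. \<beta> < \<alpha>}. pair_weight \<alpha> \<beta>) \<le> 3 * (1 / (\<alpha> * ln \<alpha>))" .
qed

lemma infsum_ordered_pairs_le:
  fixes f :: "'a::linorder \<Rightarrow> 'a \<Rightarrow> real" and g :: "'a \<Rightarrow> real"
  assumes f_nonneg: "\<And>\<alpha> \<beta>. \<alpha> \<in> C \<Longrightarrow> \<beta> \<in> C \<Longrightarrow> f \<alpha> \<beta> \<ge> 0"
    and g_nonneg: "\<And>\<alpha>. \<alpha> \<in> C \<Longrightarrow> g \<alpha> \<ge> 0" and "K \<ge> 0"
    and finite_bound: "\<And>D. finite D \<Longrightarrow> D \<subseteq> C \<Longrightarrow>
      (\<Sum>\<alpha>\<in>D. \<Sum>\<beta>\<in>{\<beta>\<in>D. \<beta> < \<alpha>}. f \<alpha> \<beta>) \<le> K * (\<Sum>\<alpha>\<in>D. g \<alpha>)"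
  shows "(\<Sum>\<^sub>\<infinity>(\<alpha>, \<beta>)\<in>{(\<alpha>, \<beta>). \<alpha> \<in> C \<and> \<beta> \<in> C \<and> \<alpha> > \<beta>}. ennreal (f \<alpha> \<beta>))
    \<le> ennreal K * (\<Sum>\<^sub>\<infinity>\<alpha>\<in>C. ennreal (g \<alpha>))"
proof (rule infsum_le_finite_sums)
  show "(\<lambda>(\<alpha>, \<beta>). ennreal (f \<alpha> \<beta>)) summable_on {(\<alpha>, \<beta>). \<alpha> \<in> C \<and> \<beta> \<in> C \<and> \<alpha> > \<beta>}"
    by (simp add: nonneg_summable_on_complete)
  fix F assume F: "finite F" "F \<subseteq> {(\<alpha>, \<beta>). \<alpha> \<in> C \<and> \<beta> \<in> C \<and> \<alpha> > \<beta>}"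
  define D where "D = fst ` F \<union> snd ` F"
  have "finite D" "D \<subseteq> C"
    using F by (auto simp: D_def)
  have F_sub: "F \<subseteq> Sigma D (\<lambda>\<alpha>. {\<beta>\<in>D. \<beta> < \<alpha>})"
    using F by (force simp: D_def)
  have "(\<Sum>x\<in>F. (\<lambda>(\<alpha>, \<beta>). ennreal (f \<alpha> \<beta>)) x)
      \<le> (\<Sum>x\<in>Sigma D (\<lambda>\<alpha>. {\<beta>\<in>D. \<beta> < \<alpha>}). (\<lambda>(\<alpha>, \<beta>). ennreal (f \<alpha> \<beta>)) x)"
    using F_sub \<open>finite D\<close> by (intro sum_mono2) auto
  also have "\<dots> = (\<Sum>\<alpha>\<in>D. \<Sum>\<beta>\<in>{\<beta>\<in>D. \<beta> < \<alpha>}. ennreal (f \<alpha> \<beta>))"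
    using \<open>finite D\<close> by (simp add: sum.Sigma)
  also have "\<dots> = (\<Sum>\<alpha>\<in>D. ennreal (\<Sum>\<beta>\<in>{\<beta>\<in>D. \<beta> < \<alpha>}. f \<alpha> \<beta>))"
    using \<open>D \<subseteq> C\<close> f_nonneg by (intro sum.cong refl sum_ennreal) auto
  also have "\<dots> = ennreal (\<Sum>\<alpha>\<in>D. \<Sum>\<beta>\<in>{\<beta>\<in>D. \<beta> < \<alpha>}. f \<alpha> \<beta>)"
    using \<open>D \<subseteq> C\<close> f_nonneg by (intro sum_ennreal sum_nonneg) auto
  also have "\<dots> \<le> ennreal (K * (\<Sum>\<alpha>\<in>D. g \<alpha>))"
    using finite_bound \<open>finite D\<close> \<open>D \<subseteq> C\<close> by (intro ennreal_leI) auto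
  also have "\<dots> = ennreal K * ennreal (\<Sum>\<alpha>\<in>D. g \<alpha>)"
    using \<open>K \<ge> 0\<close> \<open>D \<subseteq> C\<close> g_nonneg by (intro ennreal_mult sum_nonneg) auto
  also have "\<dots> = ennreal K * (\<Sum>\<alpha>\<in>D. ennreal (g \<alpha>))"
    using \<open>D \<subseteq> C\<close> g_nonneg by (subst sum_ennreal) auto
  also have "\<dots> = ennreal K * (\<Sum>\<^sub>\<infinity>\<alpha>\<in>D. ennreal (g \<alpha>))"
    using \<open>finite D\<close> by simp
  also have "\<dots> \<le> ennreal K * (\<Sum>\<^sub>\<infinity>\<alpha>\<in>C. ennreal (g \<alpha>))"
    using \<open>D \<subseteq> C\<close>
    by (intro mult_left_mono infsum_mono_neutral) (auto simp: nonneg_summable_on_complete)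
  finally show "(\<Sum>x\<in>F. (\<lambda>(\<alpha>, \<beta>). ennreal (f \<alpha> \<beta>)) x) \<le> ennreal K * (\<Sum>\<^sub>\<infinity>\<alpha>\<in>C. ennreal (g \<alpha>))" .
qed

theorem lemma2p14:
  shows "\<exists>K::real. K > 0 \<and> (\<forall>C::real set. C \<subseteq> {2..} \<and> one_spaced C \<longrightarrow>
    (\<Sum>\<^sub>\<infinity>(\<alpha>, \<beta>)\<in>{(\<alpha>, \<beta>). \<alpha> \<in> C \<and> \<beta> \<in> C \<and> \<alpha> > \<beta>}.
        ennreal ((1 / (\<alpha> * ln \<alpha>)) * (1 / (\<beta> * ln \<beta>)) * (1 / \<beta> + ln \<beta> / (\<alpha> / \<beta>))))
      \<le> ennreal K * kappa_set C)"
proof (intro exI[of _ "9 * exp 4"] conjI allI impI)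
  fix C :: "real set"
  assume C: "C \<subseteq> {2..} \<and> one_spaced C"
  have "(\<Sum>\<alpha>\<in>D. \<Sum>\<beta>\<in>{\<beta>\<in>D. \<beta> < \<alpha>}. pair_weight \<alpha> \<beta>) \<le> 9 * exp 4 * (\<Sum>\<alpha>\<in>D. kappa \<alpha>)"
    if "finite D" "D \<subseteq> C" for D
  proof -
    have "(\<Sum>\<alpha>\<in>D. \<Sum>\<beta>\<in>{\<beta>\<in>D. \<beta> < \<alpha>}. pair_weight \<alpha> \<beta>) \<le> 3 * (\<Sum>\<alpha>\<in>D. 1 / (\<alpha> * ln \<alpha>))"
      using C that one_spaced_subset[of C D] by (intro sum_pair_weight_le) auto
    also have "\<dots> \<le> 3 * (\<Sum>\<alpha>\<in>D. 3 * exp 4 * kappa \<alpha>)"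
      using C that by (intro mult_left_mono sum_mono inverse_mult_ln_le_kappa) auto
    also have "\<dots> = 9 * exp 4 * (\<Sum>\<alpha>\<in>D. kappa \<alpha>)"
      by (simp flip: sum_distrib_left)
    finally show ?thesis .
  qed
  then show "(\<Sum>\<^sub>\<infinity>(\<alpha>, \<beta>)\<in>{(\<alpha>, \<beta>). \<alpha> \<in> C \<and> \<beta> \<in> C \<and> \<alpha> > \<beta>}.
        ennreal ((1 / (\<alpha> * ln \<alpha>)) * (1 / (\<beta> * ln \<beta>)) * (1 / \<beta> + ln \<beta> / (\<alpha> / \<beta>))))
      \<le> ennreal (9 * exp 4) * kappa_set C"
    using C unfolding kappa_set_def pair_weight_def[symmetric]
    by (intro infsum_ordered_pairs_le pair_weight_nonneg kappa_nonneg) auto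
qed simp

end
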